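(* Let $A$ be a monotone complete C*-algebra and $M\subseteq N$ Hilbert $A$-modules with $M^\perp_N=\{0\}$, and regard $K_A(M)\subseteq K_A(N)$ via $\theta_{x,y}\mapsto\theta_{x,y}$ ($x,y\in M$). If $T\in\mathrm{End}^*_A(N)$ satisfies $\theta_{x,y}T=0$ for all $x,y\in M$, or $T\theta_{x,y}=0$ for all $x,y\in M$, then $T=0$.
   Context: A monotone complete C*-algebra is a unital C*-algebra in which every norm-bounded increasing net of self-adjoint elements has a supremum. $M^\perp_N=\{y\in N:\langle x,y\rangle=0\ \forall x\in M\}$. $\theta_{x,y}(z)=y\langle x,z\rangle$; $K_A(M)$ is the norm-closed span of such operators; $\mathrm{End}^*_A(N)$ is the C*-algebra of bounded adjointable $A$-linear operators on $N$. *)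

theory Defs
  imports "HOL-Analysis.Analysis"
begin

text \<open>The underlying type carries a real Banach algebra with unit; the complex scalar
multiplication scA and the involution st are explicit parameters.\<close>

definition cstar_algebra ::
  "(complex \<Rightarrow> 'a::{real_normed_algebra_1,banach} \<Rightarrow> 'a) \<Rightarrow> ('a \<Rightarrow> 'a) \<Rightarrow> bool" where
  "cstar_algebra scA st \<longleftrightarrow>
     (\<forall>r x. scA (complex_of_real r) x = scaleR r x) \<and>
     (\<forall>c x y. scA c (x + y) = scA c x + scA c y) \<and>
     (\<forall>c d x. scA (c + d) x = scA c x + scA d x) \<and>
     (\<forall>c d x. scA (c * d) x = scA c (scA d x)) \<and>
     (\<forall>x. scA 1 x = x) \<and>
     (\<forall>c x y. scA c (x * y) = scA c x * y \<and> scA c (x * y) = x * scA c y) \<and>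
     (\<forall>c x. norm (scA c x) = cmod c * norm x) \<and>
     (\<forall>x y. st (x + y) = st x + st y) \<and>
     (\<forall>c x. st (scA c x) = scA (cnj c) (st x)) \<and>
     (\<forall>x y. st (x * y) = st y * st x) \<and>
     (\<forall>x. st (st x) = x) \<and>
     (\<forall>x. norm (st x * x) = (norm x)\<^sup>2)"

definition selfadj :: "('a \<Rightarrow> 'a) \<Rightarrow> 'a \<Rightarrow> bool" where
  "selfadj st a \<longleftrightarrow> st a = a"

definition cpos :: "('a::ring \<Rightarrow> 'a) \<Rightarrow> 'a \<Rightarrow> bool" where
  "cpos st a \<longleftrightarrow> (\<exists>x. a = st x * x)"

definition cle :: "('a::ring \<Rightarrow> 'a) \<Rightarrow> 'a \<Rightarrow> 'a \<Rightarrow> bool" where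
  "cle st a b \<longleftrightarrow> cpos st (b - a)"

text \<open>Monotone completeness. An increasing net is encoded by its range, an upward directed
set; the supremum of the net is the supremum (least upper bound in the self-adjoint part)
of that set.\<close>
definition monotone_complete ::
  "(complex \<Rightarrow> 'a::{real_normed_algebra_1,banach} \<Rightarrow> 'a) \<Rightarrow> ('a \<Rightarrow> 'a) \<Rightarrow> bool" where
  "monotone_complete scA st \<longleftrightarrow> cstar_algebra scA st \<and>
     (\<forall>D. D \<noteq> {} \<and> (\<forall>a\<in>D. selfadj st a) \<and>
          (\<forall>a\<in>D. \<forall>b\<in>D. \<exists>c\<in>D. cle st a c \<and> cle st b c) \<and>
          (\<exists>K. \<forall>a\<in>D. norm a \<le> K)
        \<longrightarrow> (\<exists>s. selfadj st s \<and> (\<forall>a\<in>D. cle st a s) \<and>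
                 (\<forall>t. selfadj st t \<and> (\<forall>a\<in>D. cle st a t) \<longrightarrow> cle st s t)))"

definition hnorm :: "('n \<Rightarrow> 'n \<Rightarrow> 'a::real_normed_vector) \<Rightarrow> 'n \<Rightarrow> real" where
  "hnorm ip x = sqrt (norm (ip x x))"

definition hilbert_module ::
  "(complex \<Rightarrow> 'a::{real_normed_algebra_1,banach} \<Rightarrow> 'a) \<Rightarrow> ('a \<Rightarrow> 'a) \<Rightarrow>
   (complex \<Rightarrow> 'n::ab_group_add \<Rightarrow> 'n) \<Rightarrow> ('n \<Rightarrow> 'a \<Rightarrow> 'n) \<Rightarrow> ('n \<Rightarrow> 'n \<Rightarrow> 'a) \<Rightarrow> bool" where
  "hilbert_module scA st scN act ip \<longleftrightarrow>
     cstar_algebra scA st \<and>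
     (\<forall>c x y. scN c (x + y) = scN c x + scN c y) \<and>
     (\<forall>c d x. scN (c + d) x = scN c x + scN d x) \<and>
     (\<forall>c d x. scN (c * d) x = scN c (scN d x)) \<and>
     (\<forall>x. scN 1 x = x) \<and>
     (\<forall>x y a. act (x + y) a = act x a + act y a) \<and>
     (\<forall>x a b. act x (a + b) = act x a + act x b) \<and>
     (\<forall>x a b. act x (a * b) = act (act x a) b) \<and>
     (\<forall>x. act x 1 = x) \<and>
     (\<forall>c x a. scN c (act x a) = act (scN c x) a \<and> scN c (act x a) = act x (scA c a)) \<and>
     (\<forall>x y z. ip x (y + z) = ip x y + ip x z) \<and>
     (\<forall>c x y. ip x (scN c y) = scA c (ip x y)) \<and>
     (\<forall>x y a. ip x (act y a) = ip x y * a) \<and>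
     (\<forall>x y. st (ip x y) = ip y x) \<and>
     (\<forall>x. cpos st (ip x x)) \<and>
     (\<forall>x. ip x x = 0 \<longrightarrow> x = 0) \<and>
     (\<forall>X::nat \<Rightarrow> 'n. (\<forall>e>0. \<exists>N. \<forall>m\<ge>N. \<forall>n\<ge>N. hnorm ip (X m - X n) < e)
        \<longrightarrow> (\<exists>l. (\<lambda>n. hnorm ip (X n - l)) \<longlonglongrightarrow> 0))"

text \<open>A Hilbert A-submodule M of N (with the restricted operations): a submodule
which is complete, i.e. closed, for the module norm.\<close>
definition hilbert_submodule ::
  "(complex \<Rightarrow> 'n::ab_group_add \<Rightarrow> 'n) \<Rightarrow> ('n \<Rightarrow> 'a \<Rightarrow> 'n) \<Rightarrow> ('n \<Rightarrow> 'n \<Rightarrow> 'a::real_normed_vector) \<Rightarrow>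
   'n set \<Rightarrow> bool" where
  "hilbert_submodule scN act ip M \<longleftrightarrow>
     0 \<in> M \<and> (\<forall>x\<in>M. \<forall>y\<in>M. x + y \<in> M) \<and> (\<forall>c. \<forall>x\<in>M. scN c x \<in> M) \<and>
     (\<forall>x\<in>M. \<forall>a. act x a \<in> M) \<and>
     (\<forall>X::nat \<Rightarrow> 'n. (\<forall>n. X n \<in> M) \<and>
        (\<forall>e>0. \<exists>N. \<forall>m\<ge>N. \<forall>n\<ge>N. hnorm ip (X m - X n) < e)
        \<longrightarrow> (\<exists>l\<in>M. (\<lambda>n. hnorm ip (X n - l)) \<longlonglongrightarrow> 0))"

definition orth_compl :: "('n \<Rightarrow> 'n \<Rightarrow> 'a::zero) \<Rightarrow> 'n set \<Rightarrow> 'n set" where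
  "orth_compl ip M = {y. \<forall>x\<in>M. ip x y = 0}"

definition theta :: "('n \<Rightarrow> 'a \<Rightarrow> 'n) \<Rightarrow> ('n \<Rightarrow> 'n \<Rightarrow> 'a) \<Rightarrow> 'n \<Rightarrow> 'n \<Rightarrow> 'n \<Rightarrow> 'n" where
  "theta act ip x y = (\<lambda>z. act y (ip x z))"

definition End_adj ::
  "(complex \<Rightarrow> 'n::ab_group_add \<Rightarrow> 'n) \<Rightarrow> ('n \<Rightarrow> 'a \<Rightarrow> 'n) \<Rightarrow> ('n \<Rightarrow> 'n \<Rightarrow> 'a::real_normed_vector) \<Rightarrow>
   ('n \<Rightarrow> 'n) set" where
  "End_adj scN act ip = {T.
     (\<forall>x y. T (x + y) = T x + T y) \<and> (\<forall>c x. T (scN c x) = scN c (T x)) \<and>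
     (\<forall>x a. T (act x a) = act (T x) a) \<and>
     (\<exists>K. \<forall>x. hnorm ip (T x) \<le> K * hnorm ip x) \<and>
     (\<exists>S. \<forall>x y. ip (T x) y = ip x (S y))}"

end

theory Submission
  imports Defs
begin

text \<open>For
  \<open>a = \<langle>x,v\<rangle>\<close> one has \<open>a\<^sup>* a = \<langle>v, x a\<rangle> = \<langle>v, \<theta>(x,x) v\<rangle>\<close>, so \<open>\<theta>(x,x) v = 0\<close> forces
  \<open>\<langle>x,v\<rangle> = 0\<close>. If \<open>\<theta>(x,x) T = 0\<close> for all \<open>x \<in> M\<close>, every \<open>T z\<close> is thus orthogonal to \<open>M\<close>,
  hence zero. If \<open>T \<theta>(y,y) = 0\<close>, evaluating at \<open>T\<^sup>* T y\<close> gives \<open>\<theta>(T y, T y) (T y) = 0\<close>,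
  so \<open>T\<close> vanishes on \<open>M\<close>; then \<open>\<langle>x, T\<^sup>* v\<rangle> = \<langle>T x, v\<rangle> = 0\<close> for \<open>x \<in> M\<close>, so \<open>T\<^sup>* = 0\<close> and
  \<open>\<langle>T z, T z\<rangle> = \<langle>z, T\<^sup>* T z\<rangle> = 0\<close>.\<close>

lemma cstar_algebra_star_add:
  assumes "cstar_algebra scA st"
  shows "st (x + y) = st x + st y"
  using assms unfolding cstar_algebra_def by simp

lemma cstar_algebra_star_zero:
  assumes "cstar_algebra scA st"
  shows "st 0 = 0"
  using cstar_algebra_star_add[OF assms, of 0 0] by simp

lemma cstar_algebra_star_mult_self_eq_zero:
  fixes b :: "'a::{real_normed_algebra_1,banach}"
  assumes "cstar_algebra scA st" and "st b * b = 0"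
  shows "b = 0"
proof -
  have "norm (st b * b) = (norm b)\<^sup>2"
    using assms(1) unfolding cstar_algebra_def by simp
  with assms(2) show ?thesis by simp
qed

lemma hilbert_moduleD:
  assumes "hilbert_module scA st scN act ip"
  shows hilbert_module_cstar_algebra: "cstar_algebra scA st"
    and hilbert_module_ip_add_right: "ip x (y + z) = ip x y + ip x z"
    and hilbert_module_ip_act_right: "ip x (act y a) = ip x y * a"
    and hilbert_module_star_ip: "st (ip x y) = ip y x"
    and hilbert_module_ip_self_eq_zero: "ip x x = 0 \<Longrightarrow> x = 0"
  using assms unfolding hilbert_module_def by simp_all

lemma hilbert_module_ip_zero_right:
  assumes "hilbert_module scA st scN act ip"
  shows "ip x 0 = 0"
  using hilbert_module_ip_add_right[OF assms, of x 0 0] by simp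

lemma hilbert_module_ip_zero_left:
  assumes H: "hilbert_module scA st scN act ip"
  shows "ip 0 x = 0"
  using hilbert_module_star_ip[OF H, of x 0]
  by (simp add: hilbert_module_ip_zero_right[OF H]
      cstar_algebra_star_zero[OF hilbert_module_cstar_algebra[OF H]])

lemma hilbert_module_act_ip_eq_zero:
  assumes H: "hilbert_module scA st scN act ip" and "act x (ip x v) = 0"
  shows "ip x v = 0"
proof (rule cstar_algebra_star_mult_self_eq_zero[OF hilbert_module_cstar_algebra[OF H]])
  have "st (ip x v) * ip x v = ip v (act x (ip x v))"
    by (simp add: hilbert_module_star_ip[OF H] hilbert_module_ip_act_right[OF H])
  then show "st (ip x v) * ip x v = 0"
    by (simp add: assms(2) hilbert_module_ip_zero_right[OF H])
qed

lemma orth_compl_eq_zeroD: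
  assumes "orth_compl ip M = {0}" and "\<And>x. x \<in> M \<Longrightarrow> ip x y = 0"
  shows "y = 0"
  using assms unfolding orth_compl_def by blast

lemma End_adjD:
  assumes "T \<in> End_adj scN act ip"
  shows End_adj_act: "T (act x a) = act (T x) a"
    and End_adj_adjoint: "\<exists>S. \<forall>x y. ip (T x) y = ip x (S y)"
  using assms unfolding End_adj_def by simp_all

lemma theta_self_comp_eq_zero_imp_eq_zero:
  assumes H: "hilbert_module scA st scN act ip" and "orth_compl ip M = {0}"
    and "\<forall>x\<in>M. theta act ip x x \<circ> T = (\<lambda>_. 0)"
  shows "T = (\<lambda>_. 0)"
proof
  fix z
  show "T z = 0"
  proof (rule orth_compl_eq_zeroD[OF assms(2)])
    fix x assume "x \<in> M"
    then have "act x (ip x (T z)) = 0"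
      using assms(3) unfolding theta_def by (metis comp_apply)
    then show "ip x (T z) = 0"
      using hilbert_module_act_ip_eq_zero[OF H] by blast
  qed
qed

lemma comp_theta_self_eq_zero_imp_eq_zero:
  assumes H: "hilbert_module scA st scN act ip" and "orth_compl ip M = {0}"
    and T: "T \<in> End_adj scN act ip"
    and "\<forall>y\<in>M. T \<circ> theta act ip y y = (\<lambda>_. 0)"
  shows "T = (\<lambda>_. 0)"
proof -
  obtain S where S: "\<And>x y. ip (T x) y = ip x (S y)"
    using End_adj_adjoint[OF T] by blast
  have T_on_M: "T y = 0" if "y \<in> M" for y
  proof -
    have "T (act y (ip y (S (T y)))) = 0"
      using assms(4) \<open>y \<in> M\<close> unfolding theta_def by (metis comp_apply)
    then have "act (T y) (ip (T y) (T y)) = 0"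
      by (simp add: End_adj_act[OF T] S)
    then have "ip (T y) (T y) = 0"
      by (rule hilbert_module_act_ip_eq_zero[OF H])
    then show ?thesis
      by (rule hilbert_module_ip_self_eq_zero[OF H])
  qed
  have S_zero: "S v = 0" for v
  proof (rule orth_compl_eq_zeroD[OF assms(2)])
    fix x assume "x \<in> M"
    then show "ip x (S v) = 0"
      by (simp add: S[symmetric] T_on_M hilbert_module_ip_zero_left[OF H])
  qed
  show ?thesis
  proof
    fix z
    have "ip (T z) (T z) = 0"
      by (simp add: S S_zero hilbert_module_ip_zero_right[OF H])
    then show "T z = 0"
      by (rule hilbert_module_ip_self_eq_zero[OF H])
  qed
qed

theorem proposition2p6:
  fixes scA :: "complex \<Rightarrow> 'a::{real_normed_algebra_1,banach} \<Rightarrow> 'a"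
    and st :: "'a \<Rightarrow> 'a"
    and scN :: "complex \<Rightarrow> 'n::ab_group_add \<Rightarrow> 'n"
    and act :: "'n \<Rightarrow> 'a \<Rightarrow> 'n"
    and ip :: "'n \<Rightarrow> 'n \<Rightarrow> 'a"
    and M :: "'n set"
    and T :: "'n \<Rightarrow> 'n"
  assumes "monotone_complete scA st"
    and "hilbert_module scA st scN act ip"
    and "hilbert_submodule scN act ip M"
    and "orth_compl ip M = {0}"
    and "T \<in> End_adj scN act ip"
    and "(\<forall>x\<in>M. \<forall>y\<in>M. theta act ip x y \<circ> T = (\<lambda>_. 0)) \<or>
         (\<forall>x\<in>M. \<forall>y\<in>M. T \<circ> theta act ip x y = (\<lambda>_. 0))"
  shows "T = (\<lambda>_. 0)"
  using assms(6)
proof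
  assume "\<forall>x\<in>M. \<forall>y\<in>M. theta act ip x y \<circ> T = (\<lambda>_. 0)"
  then show ?thesis
    using theta_self_comp_eq_zero_imp_eq_zero[OF assms(2,4)] by blast
next
  assume "\<forall>x\<in>M. \<forall>y\<in>M. T \<circ> theta act ip x y = (\<lambda>_. 0)"
  then show ?thesis
    using comp_theta_self_eq_zero_imp_eq_zero[OF assms(2,4,5)] by blast
qed

end
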